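(* Let $\varphi$ be a sublinear metric-compatible function and $T\in\mathrm{Aut}(X,\mu)$ aperiodic. Then for every $U\in[T]_\varphi$, $\lim_{n\to\infty}\frac{1}{n}d_{\varphi,T}(U^n,\mathrm{id})=0$.
   Context: $(X,\mu)$ standard atomless probability space; $\mathrm{Aut}(X,\mu)$ measure-preserving transformations modulo null sets. For aperiodic $T$, $[T]$ is the set of $U\in\mathrm{Aut}(X,\mu)$ with $U(x)=T^{c_U(x)}(x)$ a.e. for a measurable $c_U:X\to\mathbb Z$. $\varphi:\mathbb R_+\to\mathbb R_+$ is metric-compatible if subadditive, non-decreasing, $\varphi(0)=0$, $\varphi(t)>0$ for $t>0$; sublinear if $\varphi(t)/t\to0$. $[T]_\varphi=\{U\in[T]:\int_X\varphi(|c_U|)d\mu<\infty\}$ and $d_{\varphi,T}(U,V)=\int_X\varphi(|c_U(x)-c_V(x)|)d\mu$. *)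

theory Defs
  imports "HOL-Probability.Probability"
begin

definition std_atomless_prob :: "'a::polish_space measure \<Rightarrow> bool" where
  "std_atomless_prob M \<longleftrightarrow> prob_space M \<and> sets M = sets borel \<and> (\<forall>x. emeasure M {x} = 0)"

definition aut :: "'a measure \<Rightarrow> ('a \<Rightarrow> 'a) \<Rightarrow> bool" where
  "aut M T \<longleftrightarrow> bij T \<and> T \<in> measurable M M \<and> inv T \<in> measurable M M \<and> distr M M T = M"

definition tpow :: "('a \<Rightarrow> 'a) \<Rightarrow> int \<Rightarrow> 'a \<Rightarrow> 'a" where
  "tpow T k = (if 0 \<le> k then T ^^ nat k else (inv T) ^^ nat (- k))"

definition aperiodic :: "'a measure \<Rightarrow> ('a \<Rightarrow> 'a) \<Rightarrow> bool" where
  "aperiodic M T \<longleftrightarrow> (AE x in M. \<forall>n::nat. n > 0 \<longrightarrow> (T ^^ n) x \<noteq> x)"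

definition is_cocycle :: "'a measure \<Rightarrow> ('a \<Rightarrow> 'a) \<Rightarrow> ('a \<Rightarrow> 'a) \<Rightarrow> ('a \<Rightarrow> int) \<Rightarrow> bool" where
  "is_cocycle M T U c \<longleftrightarrow> c \<in> measurable M (count_space UNIV) \<and> (AE x in M. U x = tpow T (c x) x)"

definition full_group :: "'a measure \<Rightarrow> ('a \<Rightarrow> 'a) \<Rightarrow> ('a \<Rightarrow> 'a) set" where
  "full_group M T = {U. aut M U \<and> (\<exists>c. is_cocycle M T U c)}"

text \<open>The cocycle c_U (unique a.e. when T is aperiodic).\<close>
definition cocycle :: "'a measure \<Rightarrow> ('a \<Rightarrow> 'a) \<Rightarrow> ('a \<Rightarrow> 'a) \<Rightarrow> 'a \<Rightarrow> int" where
  "cocycle M T U = (SOME c. is_cocycle M T U c)"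

definition metric_compatible :: "(real \<Rightarrow> real) \<Rightarrow> bool" where
  "metric_compatible \<phi> \<longleftrightarrow>
     (\<forall>t\<ge>0. \<phi> t \<ge> 0) \<and>
     (\<forall>s\<ge>0. \<forall>t\<ge>0. \<phi> (s + t) \<le> \<phi> s + \<phi> t) \<and>
     (\<forall>s\<ge>0. \<forall>t\<ge>s. \<phi> s \<le> \<phi> t) \<and>
     \<phi> 0 = 0 \<and> (\<forall>t>0. \<phi> t > 0)"

definition sublinear :: "(real \<Rightarrow> real) \<Rightarrow> bool" where
  "sublinear \<phi> \<longleftrightarrow> ((\<lambda>t. \<phi> t / t) \<longlongrightarrow> 0) at_top"

definition phi_full_group :: "'a measure \<Rightarrow> ('a \<Rightarrow> 'a) \<Rightarrow> (real \<Rightarrow> real) \<Rightarrow> ('a \<Rightarrow> 'a) set" where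
  "phi_full_group M T \<phi> =
     {U \<in> full_group M T. (\<integral>\<^sup>+ x. ennreal (\<phi> \<bar>real_of_int (cocycle M T U x)\<bar>) \<partial>M) < \<infinity>}"

definition d_phi :: "'a measure \<Rightarrow> ('a \<Rightarrow> 'a) \<Rightarrow> (real \<Rightarrow> real) \<Rightarrow> ('a \<Rightarrow> 'a) \<Rightarrow> ('a \<Rightarrow> 'a) \<Rightarrow> ennreal" where
  "d_phi M T \<phi> U V =
     (\<integral>\<^sup>+ x. ennreal (\<phi> \<bar>real_of_int (cocycle M T U x - cocycle M T V x)\<bar>) \<partial>M)"

end

theory Submission
  imports Defs
begin

text \<open>
  Write \<open>c\<close> for the cocycle of \<open>U\<close>. Cocycles are unique a.e. because \<open>T\<close> is aperiodic,
  so the cocycle of \<open>U\<^sup>n\<close> is the Birkhoff sum \<open>\<Sum>\<^sub>i\<^sub><\<^sub>n c \<circ> U\<^sup>i\<close>. Fix a cut-off \<open>L\<close> and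
  split each summand according to whether \<open>\<bar>c\<bar> \<le> L\<close>: as \<open>\<phi>\<close> is monotone and subadditive,
  the small summands contribute at most \<open>\<phi>(nL)\<close> and the large ones at most
  \<open>\<Sum>\<^sub>i \<phi>\<^sub>L(c(U\<^sup>i x))\<close>, where \<open>\<phi>\<^sub>L(t) = \<phi>(\<bar>t\<bar>)\<close> for \<open>\<bar>t\<bar> > L\<close> and \<open>0\<close> otherwise.
  Integrating and using that \<open>U\<close> preserves the measure,
  \<open>d(U\<^sup>n, id) \<le> \<phi>(nL) + n \<integral> \<phi>\<^sub>L \<circ> c\<close>. The integral tends to \<open>0\<close> as \<open>L \<rightarrow> \<infinity>\<close> since
  \<open>\<phi>(\<bar>c\<bar>)\<close> is integrable, and \<open>\<phi>(nL)/n \<rightarrow> 0\<close> for fixed \<open>L\<close> by sublinearity.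
\<close>

section \<open>Integer powers\<close>

lemma tpow_0 [simp]: "tpow T 0 x = x"
  by (simp add: tpow_def)

lemma tpow_succ:
  assumes "bij T"
  shows "tpow T (k + 1) x = T (tpow T k x)"
proof (cases "k \<ge> 0")
  case True
  then have "nat (k + 1) = Suc (nat k)" by simp
  with True show ?thesis by (simp add: tpow_def)
next
  case False
  then have "nat (- k) = Suc (nat (- (k + 1)))" by simp
  with False assms show ?thesis
    by (cases "k = -1") (simp_all add: tpow_def bij_is_surj surj_f_inv_f)
qed

lemma tpow_pred:
  assumes "bij T"
  shows "tpow T (k - 1) x = inv T (tpow T k x)"
  using tpow_succ[OF assms, of "k - 1" x] assms by (simp add: bij_is_inj)

lemma tpow_add:
  assumes "bij T"
  shows "tpow T (a + b) x = tpow T a (tpow T b x)"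
proof (induction a rule: int_induct[where k = 0])
  case (step1 i)
  have "tpow T (i + 1 + b) x = T (tpow T (i + b) x)"
    using tpow_succ[OF assms, of "i + b"] by (simp add: algebra_simps)
  with step1 tpow_succ[OF assms] show ?case by simp
next
  case (step2 i)
  have "tpow T (i - 1 + b) x = inv T (tpow T (i + b) x)"
    using tpow_pred[OF assms, of "i + b"] by (simp add: algebra_simps)
  with step2 tpow_pred[OF assms] show ?case by simp
qed simp

lemma tpow_inj_aperiodic:
  assumes "bij T" and aper: "\<forall>n::nat. n > 0 \<longrightarrow> (T ^^ n) x \<noteq> x"
    and eq: "tpow T a x = tpow T b x"
  shows "a = b"
proof (rule ccontr)
  assume "a \<noteq> b"
  have cancel: "tpow T (- k) (tpow T k x) = x" for k
    using tpow_add[OF assms(1), of "- k" k x] by simp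
  have fix_ab: "tpow T (a - b) x = x"
    using tpow_add[OF assms(1), of "- b" a x] eq cancel[of b] by simp
  have fix_ba: "tpow T (b - a) x = x"
    using cancel[of "a - b"] fix_ab by simp
  show False
  proof (cases "a > b")
    case True
    with aper fix_ab show False by (simp add: tpow_def)
  next
    case False
    with \<open>a \<noteq> b\<close> aper fix_ba show False by (simp add: tpow_def)
  qed
qed

section \<open>Iterates of a measure-preserving map\<close>

lemma measurable_funpow: "U \<in> M \<rightarrow>\<^sub>M M \<Longrightarrow> U ^^ n \<in> M \<rightarrow>\<^sub>M M"
  by (induction n) auto

lemma distr_funpow:
  assumes "U \<in> M \<rightarrow>\<^sub>M M" "distr M M U = M"
  shows "distr M M (U ^^ n) = M"
proof (induction n)
  case (Suc n)
  have "distr M M (U ^^ Suc n) = distr (distr M M (U ^^ n)) M U"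
    using distr_distr[OF assms(1) measurable_funpow[OF assms(1)]] by (simp only: funpow.simps(2))
  with Suc assms(2) show ?case by (simp add: comp_def)
qed (simp add: id_def)

lemma AE_funpow:
  assumes "U \<in> M \<rightarrow>\<^sub>M M" "distr M M U = M" "AE x in M. P x"
  shows "AE x in M. P ((U ^^ n) x)"
proof -
  have "AE x in distr M M (U ^^ n). P x"
    using assms(3) by (simp only: distr_funpow[OF assms(1,2)])
  then show ?thesis
    by (rule AE_distrD[OF measurable_funpow[OF assms(1)]])
qed

lemma nn_integral_funpow:
  assumes "U \<in> M \<rightarrow>\<^sub>M M" "distr M M U = M" "f \<in> borel_measurable M"
  shows "(\<integral>\<^sup>+ x. f ((U ^^ n) x) \<partial>M) = integral\<^sup>N M f"
  using nn_integral_distr[OF measurable_funpow[OF assms(1), of n], of f] assms(3)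
  by (simp add: distr_funpow[OF assms(1,2)])

lemma nn_integral_sum_funpow:
  assumes "U \<in> M \<rightarrow>\<^sub>M M" "distr M M U = M" "f \<in> borel_measurable M"
  shows "(\<integral>\<^sup>+ x. (\<Sum>i<n. f ((U ^^ i) x)) \<partial>M) = of_nat n * integral\<^sup>N M f"
proof -
  have "(\<integral>\<^sup>+ x. (\<Sum>i<n. f ((U ^^ i) x)) \<partial>M) = (\<Sum>i<n. \<integral>\<^sup>+ x. f ((U ^^ i) x) \<partial>M)"
    using measurable_compose[OF measurable_funpow[OF assms(1)] assms(3)]
    by (intro nn_integral_sum) auto
  then show ?thesis
    by (simp add: nn_integral_funpow[OF assms])
qed

lemma measurable_sum_count_space:
  fixes f :: "'i \<Rightarrow> 'a \<Rightarrow> 'b::{countable, comm_monoid_add}"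
  assumes "finite I" "\<And>i. i \<in> I \<Longrightarrow> f i \<in> M \<rightarrow>\<^sub>M count_space UNIV"
  shows "(\<lambda>x. \<Sum>i\<in>I. f i x) \<in> M \<rightarrow>\<^sub>M count_space UNIV"
  using assms
proof (induction I rule: finite_induct)
  case (insert j I)
  have "(\<lambda>x. f j x + k) \<in> M \<rightarrow>\<^sub>M count_space UNIV" for k
    using measurable_compose[OF insert.prems[of j] measurable_count_space, of "\<lambda>y. y + k"] by simp
  moreover have "(\<lambda>x. \<Sum>i\<in>I. f i x) \<in> M \<rightarrow>\<^sub>M count_space UNIV"
    using insert.IH insert.prems by blast
  ultimately have "(\<lambda>x. f j x + (\<Sum>i\<in>I. f i x)) \<in> M \<rightarrow>\<^sub>M count_space UNIV"
    by (rule measurable_compose_countable[where f = "\<lambda>k x. f j x + k"])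
  with insert.hyps show ?case by simp
qed simp

section \<open>Cocycles\<close>

lemma is_cocycle_cocycle: "is_cocycle M T U c \<Longrightarrow> is_cocycle M T U (cocycle M T U)"
  unfolding cocycle_def by (rule someI[of "is_cocycle M T U"])

lemma full_group_is_cocycle: "U \<in> full_group M T \<Longrightarrow> is_cocycle M T U (cocycle M T U)"
  unfolding full_group_def using is_cocycle_cocycle by blast

lemma cocycle_AE_eq:
  assumes "bij T" "aperiodic M T" and c: "is_cocycle M T U c"
  shows "AE x in M. cocycle M T U x = c x"
proof -
  have "AE x in M. U x = tpow T (cocycle M T U x) x"
    using is_cocycle_cocycle[OF c] unfolding is_cocycle_def by blast
  moreover have "AE x in M. U x = tpow T (c x) x"
    using c unfolding is_cocycle_def by blast
  moreover have "AE x in M. \<forall>n::nat. n > 0 \<longrightarrow> (T ^^ n) x \<noteq> x"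
    using assms(2) unfolding aperiodic_def .
  ultimately show ?thesis
    by eventually_elim (use tpow_inj_aperiodic[OF assms(1)] in metis)
qed

lemma cocycle_id_AE:
  assumes "bij T" "aperiodic M T"
  shows "AE x in M. cocycle M T id x = 0"
  by (rule cocycle_AE_eq[OF assms]) (simp add: is_cocycle_def)

lemma is_cocycle_funpow:
  assumes "U \<in> M \<rightarrow>\<^sub>M M" "distr M M U = M" "bij T" and c: "is_cocycle M T U c"
  shows "is_cocycle M T (U ^^ n) (\<lambda>x. \<Sum>i<n. c ((U ^^ i) x))"
proof -
  have c_meas: "c \<in> M \<rightarrow>\<^sub>M count_space UNIV"
    using c unfolding is_cocycle_def by blast
  have "AE x in M. (U ^^ n) x = tpow T (\<Sum>i<n. c ((U ^^ i) x)) x"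
  proof (induction n)
    case (Suc n)
    have "AE x in M. U ((U ^^ n) x) = tpow T (c ((U ^^ n) x)) ((U ^^ n) x)"
      using c unfolding is_cocycle_def by (intro AE_funpow[OF assms(1,2)]) blast
    with Suc show ?case
      by eventually_elim (simp add: tpow_add[OF assms(3), symmetric] add.commute)
  qed simp
  moreover have "(\<lambda>x. \<Sum>i<n. c ((U ^^ i) x)) \<in> M \<rightarrow>\<^sub>M count_space UNIV"
    using measurable_compose[OF measurable_funpow[OF assms(1)] c_meas]
    by (intro measurable_sum_count_space) auto
  ultimately show ?thesis
    unfolding is_cocycle_def by blast
qed

lemma cocycle_funpow_AE:
  assumes "bij T" "aperiodic M T" and U: "U \<in> full_group M T"
  shows "AE x in M. cocycle M T (U ^^ n) x = (\<Sum>i<n. cocycle M T U ((U ^^ i) x))"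
proof -
  have "U \<in> M \<rightarrow>\<^sub>M M" "distr M M U = M"
    using U by (auto simp: full_group_def aut_def)
  from is_cocycle_funpow[OF this assms(1) full_group_is_cocycle[OF U]]
  show ?thesis
    by (rule cocycle_AE_eq[OF assms(1,2)])
qed

section \<open>Metric-compatible functions\<close>

lemma metric_compatible_nonneg: "metric_compatible \<phi> \<Longrightarrow> t \<ge> 0 \<Longrightarrow> \<phi> t \<ge> 0"
  unfolding metric_compatible_def by blast

lemma metric_compatible_add: "metric_compatible \<phi> \<Longrightarrow> s \<ge> 0 \<Longrightarrow> t \<ge> 0 \<Longrightarrow> \<phi> (s + t) \<le> \<phi> s + \<phi> t"
  unfolding metric_compatible_def by blast

lemma metric_compatible_mono: "metric_compatible \<phi> \<Longrightarrow> s \<ge> 0 \<Longrightarrow> s \<le> t \<Longrightarrow> \<phi> s \<le> \<phi> t"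
  unfolding metric_compatible_def by blast

lemma metric_compatible_0: "metric_compatible \<phi> \<Longrightarrow> \<phi> 0 = 0"
  unfolding metric_compatible_def by blast

lemma metric_compatible_sum_le:
  assumes "metric_compatible \<phi>" "finite I" "\<And>i. i \<in> I \<Longrightarrow> b i \<ge> 0"
  shows "\<phi> (\<Sum>i\<in>I. b i) \<le> (\<Sum>i\<in>I. \<phi> (b i))"
  using assms(2,3)
proof (induction I rule: finite_induct)
  case (insert j I)
  then have "\<phi> (b j + (\<Sum>i\<in>I. b i)) \<le> \<phi> (b j) + \<phi> (\<Sum>i\<in>I. b i)"
    by (intro metric_compatible_add[OF assms(1)] sum_nonneg) auto
  with insert show ?case by simp
qed (simp add: metric_compatible_0[OF assms(1)])

definition phi_tail :: "(real \<Rightarrow> real) \<Rightarrow> nat \<Rightarrow> real \<Rightarrow> real" where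
  "phi_tail \<phi> L t = (if real L < \<bar>t\<bar> then \<phi> \<bar>t\<bar> else 0)"

lemma phi_tail_nonneg: "metric_compatible \<phi> \<Longrightarrow> phi_tail \<phi> L t \<ge> 0"
  by (simp add: phi_tail_def metric_compatible_nonneg)

lemma metric_compatible_abs_sum_le:
  assumes "metric_compatible \<phi>" "finite I"
  shows "\<phi> \<bar>\<Sum>i\<in>I. t i\<bar> \<le> \<phi> (real (card I) * real L) + (\<Sum>i\<in>I. phi_tail \<phi> L (t i))"
proof -
  define small where "small i = (if real L < \<bar>t i\<bar> then 0 else \<bar>t i\<bar>)" for i
  define large where "large i = (if real L < \<bar>t i\<bar> then \<bar>t i\<bar> else 0)" for i
  have small_le: "0 \<le> small i" "small i \<le> real L" for i
    by (auto simp: small_def)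
  have large_nonneg: "0 \<le> large i" for i
    by (simp add: large_def)
  have "\<bar>t i\<bar> = small i + large i" for i
    by (simp add: small_def large_def)
  then have "\<bar>\<Sum>i\<in>I. t i\<bar> \<le> (\<Sum>i\<in>I. small i) + (\<Sum>i\<in>I. large i)"
    using sum_abs[of t I] by (simp add: sum.distrib)
  then have "\<phi> \<bar>\<Sum>i\<in>I. t i\<bar> \<le> \<phi> ((\<Sum>i\<in>I. small i) + (\<Sum>i\<in>I. large i))"
    by (rule metric_compatible_mono[OF assms(1), rotated]) simp
  also have "\<dots> \<le> \<phi> (\<Sum>i\<in>I. small i) + \<phi> (\<Sum>i\<in>I. large i)"
    using small_le large_nonneg by (intro metric_compatible_add[OF assms(1)] sum_nonneg) auto
  also have "\<phi> (\<Sum>i\<in>I. small i) \<le> \<phi> (real (card I) * real L)"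
    using small_le sum_bounded_above[of I small "real L"]
    by (intro metric_compatible_mono[OF assms(1)] sum_nonneg) auto
  also have "\<phi> (\<Sum>i\<in>I. large i) \<le> (\<Sum>i\<in>I. \<phi> (large i))"
    using large_nonneg by (intro metric_compatible_sum_le[OF assms])
  also have "(\<Sum>i\<in>I. \<phi> (large i)) = (\<Sum>i\<in>I. phi_tail \<phi> L (t i))"
    by (intro sum.cong refl) (simp add: large_def phi_tail_def metric_compatible_0[OF assms(1)])
  finally show ?thesis by simp
qed

lemma nn_integral_phi_tail_INF:
  assumes "metric_compatible \<phi>" and c: "c \<in> M \<rightarrow>\<^sub>M count_space UNIV"
    and fin: "(\<integral>\<^sup>+ x. ennreal (\<phi> \<bar>real_of_int (c x)\<bar>) \<partial>M) < \<infinity>"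
  shows "(INF L. \<integral>\<^sup>+ x. ennreal (phi_tail \<phi> L (real_of_int (c x))) \<partial>M) = 0"
proof -
  define f where "f = (\<lambda>L x. ennreal (phi_tail \<phi> L (real_of_int (c x))))"
  have meas: "f L \<in> borel_measurable M" for L
    using measurable_compose[OF c, of "\<lambda>j. ennreal (phi_tail \<phi> L (real_of_int j))" borel]
    unfolding f_def by simp
  have decreasing: "AE x in M. f (Suc L) x \<le> f L x" for L
    using metric_compatible_nonneg[OF assms(1)] by (auto simp: f_def phi_tail_def)
  have "(\<integral>\<^sup>+ x. f 0 x \<partial>M) \<le> (\<integral>\<^sup>+ x. ennreal (\<phi> \<bar>real_of_int (c x)\<bar>) \<partial>M)"
    using metric_compatible_nonneg[OF assms(1)]
    by (intro nn_integral_mono) (simp add: f_def phi_tail_def)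
  with fin have "(\<integral>\<^sup>+ x. f 0 x \<partial>M) < \<infinity>" by order
  then have "(INF L. integral\<^sup>N M (f L)) = (\<integral>\<^sup>+ x. (INF L. f L x) \<partial>M)"
    using nn_integral_monotone_convergence_INF_AE'[of f, OF decreasing meas] by simp
  moreover have "(INF L. f L x) = 0" for x
  proof -
    have "f (nat \<lceil>\<bar>real_of_int (c x)\<bar>\<rceil>) x = 0"
      by (simp add: f_def phi_tail_def)
    then show ?thesis
      by (metis INF_lower UNIV_I le_zero_eq)
  qed
  ultimately have "(INF L. integral\<^sup>N M (f L)) = 0"
    by simp
  then show ?thesis
    by (simp add: f_def)
qed

lemma phi_full_group_phi_tail_small:
  assumes "metric_compatible \<phi>" "U \<in> phi_full_group M T \<phi>" "e > 0"
  obtains L where "(\<integral>\<^sup>+ x. ennreal (phi_tail \<phi> L (cocycle M T U x)) \<partial>M) < ennreal e"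
proof -
  have U: "U \<in> full_group M T"
    and fin: "(\<integral>\<^sup>+ x. ennreal (\<phi> \<bar>real_of_int (cocycle M T U x)\<bar>) \<partial>M) < \<infinity>"
    using assms(2) unfolding phi_full_group_def by auto
  then have "cocycle M T U \<in> M \<rightarrow>\<^sub>M count_space UNIV"
    using full_group_is_cocycle unfolding is_cocycle_def by blast
  with nn_integral_phi_tail_INF[OF assms(1) _ fin] assms(3)
  have "(INF L. \<integral>\<^sup>+ x. ennreal (phi_tail \<phi> L (cocycle M T U x)) \<partial>M) < ennreal e"
    by simp
  then show ?thesis
    using that by (auto simp: INF_less_iff)
qed

lemma d_phi_funpow_id_le:
  assumes "prob_space M" "metric_compatible \<phi>" "bij T" "aperiodic M T"
    and U: "U \<in> full_group M T"
  shows "d_phi M T \<phi> (U ^^ n) id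
    \<le> ennreal (\<phi> (real n * real L)) + of_nat n * (\<integral>\<^sup>+ x. ennreal (phi_tail \<phi> L (cocycle M T U x)) \<partial>M)"
proof -
  define c where "c = cocycle M T U"
  define \<psi> where "\<psi> = (\<lambda>x. ennreal (phi_tail \<phi> L (real_of_int (c x))))"
  have U_meas: "U \<in> M \<rightarrow>\<^sub>M M" and U_distr: "distr M M U = M"
    using U by (auto simp: full_group_def aut_def)
  have \<psi>_meas: "\<psi> \<in> borel_measurable M"
    using full_group_is_cocycle[OF U]
      measurable_compose[of c M "count_space UNIV" "\<lambda>j. ennreal (phi_tail \<phi> L (real_of_int j))" borel]
    unfolding is_cocycle_def \<psi>_def c_def by simp
  from cocycle_funpow_AE[OF assms(3,4) U, of n] cocycle_id_AE[OF assms(3,4)]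
  have pointwise: "AE x in M. ennreal (\<phi> \<bar>real_of_int (cocycle M T (U ^^ n) x - cocycle M T id x)\<bar>)
      \<le> ennreal (\<phi> (real n * real L)) + (\<Sum>i<n. \<psi> ((U ^^ i) x))"
  proof eventually_elim
    case (elim x)
    have "\<phi> \<bar>\<Sum>i<n. real_of_int (c ((U ^^ i) x))\<bar>
        \<le> \<phi> (real n * real L) + (\<Sum>i<n. phi_tail \<phi> L (real_of_int (c ((U ^^ i) x))))"
      using metric_compatible_abs_sum_le[OF assms(2), of "{..<n}"] by simp
    then have "ennreal (\<phi> \<bar>\<Sum>i<n. real_of_int (c ((U ^^ i) x))\<bar>)
        \<le> ennreal (\<phi> (real n * real L)) + ennreal (\<Sum>i<n. phi_tail \<phi> L (real_of_int (c ((U ^^ i) x))))"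
      using metric_compatible_nonneg[OF assms(2)] phi_tail_nonneg[OF assms(2)]
      by (simp add: ennreal_leI sum_nonneg flip: ennreal_plus)
    with elim show ?case
      using phi_tail_nonneg[OF assms(2)] by (simp add: \<psi>_def c_def)
  qed
  have "d_phi M T \<phi> (U ^^ n) id
      \<le> (\<integral>\<^sup>+ x. ennreal (\<phi> (real n * real L)) + (\<Sum>i<n. \<psi> ((U ^^ i) x)) \<partial>M)"
    unfolding d_phi_def by (rule nn_integral_mono_AE[OF pointwise])
  also have "\<dots> = (\<integral>\<^sup>+ x. ennreal (\<phi> (real n * real L)) \<partial>M) + (\<integral>\<^sup>+ x. (\<Sum>i<n. \<psi> ((U ^^ i) x)) \<partial>M)"
    using measurable_compose[OF measurable_funpow[OF U_meas] \<psi>_meas]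
    by (intro nn_integral_add borel_measurable_sum) auto
  also have "\<dots> = ennreal (\<phi> (real n * real L)) + of_nat n * integral\<^sup>N M \<psi>"
    by (simp add: nn_integral_sum_funpow[OF U_meas U_distr \<psi>_meas] prob_space.emeasure_space_1[OF assms(1)])
  finally show ?thesis
    unfolding \<psi>_def c_def .
qed

section \<open>Asymptotics\<close>

lemma sublinear_scaled_tendsto:
  assumes "sublinear \<phi>" "a \<ge> 0"
  shows "(\<lambda>n. \<phi> (real n * a) / real n) \<longlonglongrightarrow> 0"
proof (cases "a = 0")
  case True
  then show ?thesis
    by (simp add: lim_const_over_n)
next
  case False
  with assms(2) have "filterlim (\<lambda>n. real n * a) at_top sequentially"
    by (intro filterlim_at_top_mult_tendsto_pos[OF tendsto_const] filterlim_real_sequentially) auto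
  with assms(1) have "(\<lambda>n. \<phi> (real n * a) / (real n * a)) \<longlonglongrightarrow> 0"
    unfolding sublinear_def by (rule filterlim_compose)
  from tendsto_mult[OF tendsto_const[of a] this]
  have "(\<lambda>n. a * (\<phi> (real n * a) / (real n * a))) \<longlonglongrightarrow> 0"
    by simp
  moreover have "eventually (\<lambda>n. a * (\<phi> (real n * a) / (real n * a)) = \<phi> (real n * a) / real n) sequentially"
    using eventually_gt_at_top[of "0::nat"] by eventually_elim (use False in simp)
  ultimately show ?thesis
    by (rule Lim_transform_eventually)
qed

lemma ennreal_divide_of_nat_tendsto_0:
  assumes "\<And>r. r > 0 \<Longrightarrow> eventually (\<lambda>n. x n \<le> of_nat n * ennreal r) sequentially"
  shows "(\<lambda>n. x n / of_nat n) \<longlonglongrightarrow> 0"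
proof (rule order_tendstoI)
  fix e :: ennreal
  assume "0 < e"
  then obtain q where q: "0 < ennreal (real_of_rat q)" "ennreal (real_of_rat q) < e"
    using ennreal_rat_dense by blast
  then have "real_of_rat q > 0"
    using ennreal_less_zero_iff by blast
  from assms[OF this] eventually_gt_at_top[of "0::nat"]
  show "eventually (\<lambda>n. x n / of_nat n < e) sequentially"
  proof eventually_elim
    case (elim n)
    then have "x n / of_nat n \<le> of_nat n * ennreal (real_of_rat q) / of_nat n"
      by (intro divide_right_mono_ennreal)
    also have "\<dots> = ennreal (real_of_rat q) * of_nat n / of_nat n"
      by (simp only: mult.commute)
    also have "\<dots> = ennreal (real_of_rat q)"
      using elim by (intro ennreal_mult_divide_eq) auto
    finally show ?case using q(2) by order
  qed
qed simp

lemma ennreal_add_of_nat_mult_le: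
  assumes "a \<le> real n * r" "b \<le> ennreal s" "0 \<le> r" "0 \<le> s"
  shows "ennreal a + of_nat n * b \<le> of_nat n * ennreal (r + s)"
proof -
  have "ennreal a + of_nat n * b \<le> ennreal (real n * r) + of_nat n * ennreal s"
    using assms(1,2) by (intro add_mono mult_left_mono ennreal_leI) simp_all
  also have "ennreal (real n * r) = of_nat n * ennreal r"
    using assms(3) by (subst ennreal_mult) (simp_all add: ennreal_of_nat_eq_real_of_nat)
  also have "of_nat n * ennreal r + of_nat n * ennreal s = of_nat n * ennreal (r + s)"
    using assms(3,4) by (simp flip: distrib_left ennreal_plus)
  finally show ?thesis .
qed

theorem mainTheorem13:
  fixes M :: "'a::polish_space measure" and T U :: "'a \<Rightarrow> 'a" and \<phi> :: "real \<Rightarrow> real"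
  assumes "std_atomless_prob M"
    and "metric_compatible \<phi>" and "sublinear \<phi>"
    and "aut M T" and "aperiodic M T"
    and "U \<in> phi_full_group M T \<phi>"
  shows "(\<lambda>n::nat. d_phi M T \<phi> (U ^^ n) id / of_nat n) \<longlonglongrightarrow> 0"
proof (rule ennreal_divide_of_nat_tendsto_0)
  fix r :: real
  assume "r > 0"
  have "prob_space M" and "bij T" and U: "U \<in> full_group M T"
    using assms(1,4,6) by (simp_all add: std_atomless_prob_def aut_def phi_full_group_def)
  obtain L where L: "(\<integral>\<^sup>+ x. ennreal (phi_tail \<phi> L (cocycle M T U x)) \<partial>M) < ennreal (r / 2)"
    using phi_full_group_phi_tail_small[OF assms(2,6) half_gt_zero[OF \<open>r > 0\<close>]] by blast
  have "eventually (\<lambda>n. \<phi> (real n * real L) / real n < r / 2) sequentially"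
    using order_tendstoD(2)[OF sublinear_scaled_tendsto[OF assms(3) of_nat_0_le_iff[of L]], of "r / 2"]
      \<open>r > 0\<close> by simp
  with eventually_gt_at_top[of "0::nat"]
  show "eventually (\<lambda>n. d_phi M T \<phi> (U ^^ n) id \<le> of_nat n * ennreal r) sequentially"
  proof eventually_elim
    case (elim n)
    then have "\<phi> (real n * real L) \<le> real n * (r / 2)"
      by (simp add: pos_divide_less_eq mult.commute)
    have "d_phi M T \<phi> (U ^^ n) id
        \<le> ennreal (\<phi> (real n * real L)) + of_nat n * (\<integral>\<^sup>+ x. ennreal (phi_tail \<phi> L (cocycle M T U x)) \<partial>M)"
      by (rule d_phi_funpow_id_le[OF \<open>prob_space M\<close> assms(2) \<open>bij T\<close> assms(5) U])
    also have "\<dots> \<le> of_nat n * ennreal (r / 2 + r / 2)"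
      using \<open>\<phi> (real n * real L) \<le> real n * (r / 2)\<close> less_imp_le[OF L] \<open>r > 0\<close>
      by (intro ennreal_add_of_nat_mult_le) simp_all
    finally show ?case
      by simp
  qed
qed

end
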